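(* Let $p>1$ and let ${\bf a}=(a_n)_{n\in\mathbb N}$ be a good weight for the dominated weighted ergodic theorem in $L^p$. Then the Nörlund matrix $N_{\bf a}$ is bounded on $\ell^p(\mathbb N)$. Moreover, for every non-increasing sequence $(b_n)_{n\in\mathbb N}$ of nonnegative numbers, with ${\bf c}:=(a_nb_n)_{n\in\mathbb N}$, the Nörlund matrix $N_{\bf c}$ is bounded on $\ell^p(\mathbb N)$.
   Context: For a complex sequence ${\bf a}=(a_n)_{n\in\mathbb N}$ set $A_i:=\sum_{k=0}^i|a_k|$. The Nörlund matrix $N_{\bf a}=(a_{ij})_{i,j\in\mathbb N}$ has entries $a_{ij}=a_{i-j}/A_i$ if $0\le j\le i$ and $A_i>0$, and $a_{ij}=0$ if $j>i$ or $A_i=0$; it is bounded on $\ell^p(\mathbb N)$ if there is $C_p$ with $\|N_{\bf a}u\|_{\ell^p}\le C_p\|u\|_{\ell^p}$ for all finitely supported $u$. (For ${\bf c}$, $A_i$ is replaced by $\sum_{k=0}^i|c_k|$.) The sequence ${\bf a}$ is a good weight for the dominated weighted ergodic theorem in $L^p$ if there is $C>0$ such that for every probability-measure-preserving system $(X,\Sigma,\nu,\tau)$ and every $f\in L^p(\nu)$, $\|\sup_{n\ge0}\frac1{A_n}|\sum_{k=0}^na_kf\circ\tau^k|\|_{L^p(\nu)}\le C\|f\|_{L^p(\nu)}$, with the quotient read as $0$ when $A_n=0$. *)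

theory Defs
  imports "HOL-Probability.Probability"
begin

definition norlund :: "(nat \<Rightarrow> complex) \<Rightarrow> nat \<Rightarrow> nat \<Rightarrow> complex" where
  "norlund a i j =
     (let A = (\<Sum>k\<le>i. norm (a k)) in
      if j \<le> i \<and> A > 0 then a (i - j) / complex_of_real A else 0)"

text \<open>Boundedness of an infinite matrix on l^p(N), tested on finitely supported vectors:
  ||M u||_p \<le> C ||u||_p, where the l^p norm of M u is the supremum of its partial sums.\<close>
definition lp_bounded :: "real \<Rightarrow> (nat \<Rightarrow> nat \<Rightarrow> complex) \<Rightarrow> bool" where
  "lp_bounded p M \<longleftrightarrow>
     (\<exists>C. \<forall>u :: nat \<Rightarrow> complex. finite {j. u j \<noteq> 0} \<longrightarrow>
        (\<forall>n. (\<Sum>i<n. norm (\<Sum>j\<in>{j. u j \<noteq> 0}. M i j * u j) powr p) powr (1 / p)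
             \<le> C * (\<Sum>j\<in>{j. u j \<noteq> 0}. norm (u j) powr p) powr (1 / p)))"

definition pmp_system :: "real measure \<Rightarrow> (real \<Rightarrow> real) \<Rightarrow> bool" where
  "pmp_system M T \<longleftrightarrow> prob_space M \<and> T \<in> measurable M M \<and> distr M M T = M"

text \<open>Good weight for the dominated weighted ergodic theorem in L^p:
  ||sup_n |1/A_n sum_{k \<le> n} a_k f o T^k| ||_p \<le> C ||f||_p, written with p-th powers
  (the quotient is 0 when A_n = 0 since x / 0 = 0).\<close>
definition good_weight :: "real \<Rightarrow> (nat \<Rightarrow> complex) \<Rightarrow> bool" where
  "good_weight p a \<longleftrightarrow>
     (\<exists>C>0. \<forall>M T (f :: real \<Rightarrow> complex).
        pmp_system M T \<and> f \<in> borel_measurable M \<and>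
        (\<integral>\<^sup>+ x. ennreal (norm (f x) powr p) \<partial>M) < \<infinity> \<longrightarrow>
        (\<integral>\<^sup>+ x. (SUP n. ennreal ((norm (\<Sum>k\<le>n. a k * f ((T ^^ k) x))
                                    / (\<Sum>k\<le>n. norm (a k))) powr p)) \<partial>M)
          \<le> ennreal (C powr p) * (\<integral>\<^sup>+ x. ennreal (norm (f x) powr p) \<partial>M))"

end

theory Submission
  imports Defs
begin

text \<open>Transference: applying the dominated weighted ergodic inequality to the rotation of N points
  gives the discrete maximal inequality
    sum_{i<N} max_{n<=i} (|sum_{k<=n} a_k g_{i-k}| / A_n)^p <= C^p sum_{i<N} |g_i|^p,
  because for n <= i the orbit of the point i does not wrap around. The i-th entry of N_a u is the
  term n = i of this maximum, so N_a is bounded. Abel summation shows that weighting a by a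
  nonnegative nonincreasing b does not increase the maximal function, so the same holds for N_c.\<close>

lemma abel_summation:
  fixes a b x :: "nat \<Rightarrow> 'a::comm_ring"
  shows "(\<Sum>k\<le>n. a k * b k * x k) =
     b n * (\<Sum>k\<le>n. a k * x k) + (\<Sum>m<n. (b m - b (Suc m)) * (\<Sum>k\<le>m. a k * x k))"
  by (induction n) (simp_all add: algebra_simps)

lemma norm_sum_mult_antimono_le:
  fixes a x :: "nat \<Rightarrow> 'a::real_normed_field" and b :: "nat \<Rightarrow> real"
  assumes b_nonneg: "\<And>n. 0 \<le> b n" and "antimono b" and "0 \<le> K"
    and partial_bound: "\<And>m. m \<le> n \<Longrightarrow> norm (\<Sum>k\<le>m. a k * x k) \<le> K * (\<Sum>k\<le>m. norm (a k))"
  shows "norm (\<Sum>k\<le>n. a k * of_real (b k) * x k) \<le> K * (\<Sum>k\<le>n. norm (a k) * b k)"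
proof -
  have step_nonneg: "0 \<le> b m - b (Suc m)" for m
    using \<open>antimono b\<close> by (simp add: antimono_def)
  have "norm (\<Sum>k\<le>n. a k * of_real (b k) * x k)
      = norm (of_real (b n) * (\<Sum>k\<le>n. a k * x k)
              + (\<Sum>m<n. of_real (b m - b (Suc m)) * (\<Sum>k\<le>m. a k * x k)))"
    by (subst abel_summation) simp
  also have "\<dots> \<le> b n * norm (\<Sum>k\<le>n. a k * x k)
                  + (\<Sum>m<n. (b m - b (Suc m)) * norm (\<Sum>k\<le>m. a k * x k))"
    using b_nonneg step_nonneg
    by (intro order_trans[OF norm_triangle_ineq] add_mono order_trans[OF norm_sum] sum_mono)
       (simp_all add: norm_mult flip: of_real_diff)
  also have "\<dots> \<le> b n * (K * (\<Sum>k\<le>n. norm (a k)))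
                  + (\<Sum>m<n. (b m - b (Suc m)) * (K * (\<Sum>k\<le>m. norm (a k))))"
    using b_nonneg step_nonneg by (intro add_mono sum_mono mult_left_mono partial_bound) auto
  also have "\<dots> = K * (\<Sum>k\<le>n. norm (a k) * b k * 1)"
    by (subst abel_summation[of "\<lambda>k. norm (a k)" b "\<lambda>_. 1"])
       (simp add: algebra_simps sum_distrib_left)
  finally show ?thesis by simp
qed

definition weighted_avg :: "(nat \<Rightarrow> complex) \<Rightarrow> (nat \<Rightarrow> complex) \<Rightarrow> nat \<Rightarrow> nat \<Rightarrow> real" where
  "weighted_avg a g i n = norm (\<Sum>k\<le>n. a k * g (i - k)) / (\<Sum>k\<le>n. norm (a k))"

definition maximal_avg :: "(nat \<Rightarrow> complex) \<Rightarrow> (nat \<Rightarrow> complex) \<Rightarrow> nat \<Rightarrow> real" where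
  "maximal_avg a g i = Max (weighted_avg a g i ` {..i})"

definition maximal_inequality :: "real \<Rightarrow> (nat \<Rightarrow> complex) \<Rightarrow> bool" where
  "maximal_inequality p a \<longleftrightarrow>
     (\<exists>C>0. \<forall>N g. (\<Sum>i<N. maximal_avg a g i powr p) \<le> C powr p * (\<Sum>i<N. norm (g i) powr p))"

lemma weighted_avg_nonneg: "0 \<le> weighted_avg a g i n"
  unfolding weighted_avg_def by (simp add: sum_nonneg)

lemma weighted_avg_le_maximal_avg: "n \<le> i \<Longrightarrow> weighted_avg a g i n \<le> maximal_avg a g i"
  unfolding maximal_avg_def by (rule Max_ge) auto

lemma maximal_avg_attained: "\<exists>n\<le>i. maximal_avg a g i = weighted_avg a g i n"
proof -
  have "maximal_avg a g i \<in> weighted_avg a g i ` {..i}"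
    unfolding maximal_avg_def by (rule Max_in) auto
  then show ?thesis by auto
qed

lemma maximal_avg_nonneg: "0 \<le> maximal_avg a g i"
  using weighted_avg_le_maximal_avg[of 0 i] weighted_avg_nonneg order_trans by blast

lemma norm_sum_le_maximal_avg:
  assumes "m \<le> i"
  shows "norm (\<Sum>k\<le>m. a k * g (i - k)) \<le> maximal_avg a g i * (\<Sum>k\<le>m. norm (a k))"
proof (cases "(\<Sum>k\<le>m. norm (a k)) = 0")
  case True
  then have "\<forall>k\<le>m. a k = 0" by (simp add: sum_nonneg_eq_0_iff)
  then show ?thesis by simp
next
  case False
  then have "0 < (\<Sum>k\<le>m. norm (a k))" by (simp add: less_le sum_nonneg)
  then show ?thesis
    using weighted_avg_le_maximal_avg[OF assms, of a g]
    by (simp add: weighted_avg_def divide_le_eq)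
qed

lemma maximal_avg_mult_antimono_le:
  assumes b_nonneg: "\<And>n. 0 \<le> b n" and "antimono b"
  shows "maximal_avg (\<lambda>n. a n * complex_of_real (b n)) g i \<le> maximal_avg a g i"
proof -
  let ?K = "maximal_avg a g i"
  obtain n where "n \<le> i" and attained:
    "maximal_avg (\<lambda>n. a n * complex_of_real (b n)) g i = weighted_avg (\<lambda>n. a n * complex_of_real (b n)) g i n"
    using maximal_avg_attained by blast
  have norm_ab: "norm (a k * complex_of_real (b k)) = norm (a k) * b k" for k
    using b_nonneg[of k] by (simp add: norm_mult)
  have "norm (\<Sum>k\<le>n. a k * complex_of_real (b k) * g (i - k)) \<le> ?K * (\<Sum>k\<le>n. norm (a k) * b k)"
    using \<open>n \<le> i\<close> by (intro norm_sum_mult_antimono_le assms maximal_avg_nonneg norm_sum_le_maximal_avg) auto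
  then have "weighted_avg (\<lambda>n. a n * complex_of_real (b n)) g i n \<le> ?K"
    using maximal_avg_nonneg[of a g i] sum_nonneg[of "{..n}" "\<lambda>k. norm (a k) * b k"] b_nonneg
    by (cases "(\<Sum>k\<le>n. norm (a k) * b k) = 0")
       (auto simp: weighted_avg_def norm_ab divide_le_eq less_le)
  then show ?thesis using attained by simp
qed

lemma maximal_inequality_mult_antimono:
  assumes "0 \<le> p" and "maximal_inequality p a" and "\<And>n. 0 \<le> b n" and "antimono b"
  shows "maximal_inequality p (\<lambda>n. a n * complex_of_real (b n))"
proof -
  obtain C where "C > 0"
    and bound: "\<And>N g. (\<Sum>i<N. maximal_avg a g i powr p) \<le> C powr p * (\<Sum>i<N. norm (g i) powr p)"
    using assms(2) unfolding maximal_inequality_def by blast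
  have "(\<Sum>i<N. maximal_avg (\<lambda>n. a n * complex_of_real (b n)) g i powr p)
          \<le> (\<Sum>i<N. maximal_avg a g i powr p)" for N g
    using assms by (intro sum_mono powr_mono2 maximal_avg_nonneg maximal_avg_mult_antimono_le)
  then show ?thesis
    unfolding maximal_inequality_def using \<open>C > 0\<close> bound by (meson order_trans)
qed

lemma norm_norlund_row:
  assumes "finite {j. u j \<noteq> 0}"
  shows "norm (\<Sum>j\<in>{j. u j \<noteq> 0}. norlund a i j * u j) = weighted_avg a u i i"
proof -
  let ?A = "\<Sum>k\<le>i. norm (a k)"
  have "(\<Sum>j\<in>{j. u j \<noteq> 0}. norlund a i j * u j) = (\<Sum>j\<le>i. norlund a i j * u j)"
    using assms by (intro sum.mono_neutral_cong) (auto simp: norlund_def)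
  also have "\<dots> = (\<Sum>j\<le>i. a (i - j) * u j) / complex_of_real ?A"
  proof (cases "?A > 0")
    case False
    then have "?A = 0" by (simp add: order.antisym sum_nonneg)
    then show ?thesis by (simp add: norlund_def)
  qed (simp add: norlund_def sum_divide_distrib)
  also have "(\<Sum>j\<le>i. a (i - j) * u j) = (\<Sum>k\<le>i. a k * u (i - k))"
    by (rule sum.reindex_bij_witness[where i="\<lambda>k. i - k" and j="\<lambda>k. i - k"]) auto
  finally show ?thesis by (simp add: weighted_avg_def norm_divide sum_nonneg flip: of_real_sum)
qed

lemma maximal_inequality_imp_lp_bounded:
  assumes "0 < p" and "maximal_inequality p a"
  shows "lp_bounded p (norlund a)"
proof -
  obtain C where "C > 0"
    and bound: "\<And>N g. (\<Sum>i<N. maximal_avg a g i powr p) \<le> C powr p * (\<Sum>i<N. norm (g i) powr p)"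
    using assms(2) unfolding maximal_inequality_def by blast
  show ?thesis unfolding lp_bounded_def
  proof (intro exI allI impI)
    fix u :: "nat \<Rightarrow> complex" and n
    let ?U = "{j. u j \<noteq> 0}"
    assume "finite ?U"
    have "(\<Sum>i<n. norm (\<Sum>j\<in>?U. norlund a i j * u j) powr p) \<le> (\<Sum>i<n. maximal_avg a u i powr p)"
      using \<open>0 < p\<close> by (intro sum_mono powr_mono2)
        (auto simp: norm_norlund_row[OF \<open>finite ?U\<close>] weighted_avg_nonneg weighted_avg_le_maximal_avg)
    also have "\<dots> \<le> C powr p * (\<Sum>i<n. norm (u i) powr p)" by (rule bound)
    also have "(\<Sum>i<n. norm (u i) powr p) = (\<Sum>i\<in>{..<n} \<inter> ?U. norm (u i) powr p)"
      by (rule sum.mono_neutral_right) auto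
    also have "\<dots> \<le> (\<Sum>j\<in>?U. norm (u j) powr p)"
      using \<open>finite ?U\<close> by (intro sum_mono2) auto
    finally have "(\<Sum>i<n. norm (\<Sum>j\<in>?U. norlund a i j * u j) powr p) powr (1/p)
                    \<le> (C powr p * (\<Sum>j\<in>?U. norm (u j) powr p)) powr (1/p)"
      using \<open>0 < p\<close> \<open>C > 0\<close> by (intro powr_mono2) (auto intro: sum_nonneg)
    also have "\<dots> = C * (\<Sum>j\<in>?U. norm (u j) powr p) powr (1/p)"
      using \<open>0 < p\<close> \<open>C > 0\<close> by (simp add: powr_mult sum_nonneg powr_powr)
    finally show "(\<Sum>i<n. norm (\<Sum>j\<in>?U. norlund a i j * u j) powr p) powr (1/p)
                    \<le> C * (\<Sum>j\<in>?U. norm (u j) powr p) powr (1/p)" .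
  qed
qed

text \<open>Off the points \<open>0, \<dots>, N - 1\<close> of the real line the values of the rotation are irrelevant.\<close>

definition cyclic_shift :: "nat \<Rightarrow> real \<Rightarrow> real" where
  "cyclic_shift N x = (if x = 0 then real N - 1 else x - 1)"

lemma cyclic_shift_funpow: "k \<le> i \<Longrightarrow> (cyclic_shift N ^^ k) (real i) = real (i - k)"
  by (induction k) (auto simp: cyclic_shift_def of_nat_diff)

lemma cyclic_shift_image: "0 < N \<Longrightarrow> cyclic_shift N ` real ` {..<N} = real ` {..<N}"
proof (rule endo_inj_surj)
  assume "0 < N"
  show "cyclic_shift N ` real ` {..<N} \<subseteq> real ` {..<N}"
  proof clarify
    fix i assume "i < N"
    then have "cyclic_shift N (real i) = real (if i = 0 then N - 1 else i - 1)"
      using \<open>0 < N\<close> by (simp add: cyclic_shift_def of_nat_diff)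
    then show "cyclic_shift N (real i) \<in> real ` {..<N}"
      using \<open>i < N\<close> \<open>0 < N\<close> by (simp del: of_nat_diff)
  qed
  show "inj_on (cyclic_shift N) (real ` {..<N})"
    using \<open>0 < N\<close> by (auto simp: inj_on_def cyclic_shift_def)
qed simp

lemma pmp_system_cyclic_shift:
  assumes "0 < N"
  shows "pmp_system (measure_pmf (pmf_of_set (real ` {..<N}))) (cyclic_shift N)"
proof -
  let ?S = "real ` {..<N}"
  have "?S \<noteq> {}" using assms by auto
  have "inj_on (cyclic_shift N) ?S"
    using assms by (auto simp: inj_on_def cyclic_shift_def)
  have "distr (measure_pmf (pmf_of_set ?S)) (measure_pmf (pmf_of_set ?S)) (cyclic_shift N)
      = measure_pmf (map_pmf (cyclic_shift N) (pmf_of_set ?S))"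
    by (subst map_pmf_rep_eq) (rule distr_cong; simp)
  also have "\<dots> = measure_pmf (pmf_of_set ?S)"
    using \<open>?S \<noteq> {}\<close> \<open>inj_on (cyclic_shift N) ?S\<close>
    by (simp add: map_pmf_of_set_inj cyclic_shift_image[OF assms])
  finally show ?thesis
    unfolding pmp_system_def by (simp add: measure_pmf.prob_space_axioms)
qed

lemma nn_integral_uniform_range:
  assumes "0 < N"
  shows "(\<integral>\<^sup>+x. h x \<partial>measure_pmf (pmf_of_set (real ` {..<N}))) = (\<Sum>i<N. h (real i)) / of_nat N"
proof -
  have "real ` {..<N} \<noteq> {}" using assms by auto
  moreover have "card (real ` {..<N}) = N" by (simp add: card_image)
  ultimately show ?thesis
    by (simp add: nn_integral_pmf_of_set sum.reindex)
qed

lemma maximal_avg_powr_le_SUP_cyclic_shift: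
  "ennreal (maximal_avg a g i powr p)
     \<le> (SUP n. ennreal ((norm (\<Sum>k\<le>n. a k * g (nat \<lfloor>(cyclic_shift N ^^ k) (real i)\<rfloor>))
                          / (\<Sum>k\<le>n. norm (a k))) powr p))"
proof -
  obtain n where "n \<le> i" and "maximal_avg a g i = weighted_avg a g i n"
    using maximal_avg_attained by blast
  moreover have "(\<Sum>k\<le>n. a k * g (nat \<lfloor>(cyclic_shift N ^^ k) (real i)\<rfloor>)) = (\<Sum>k\<le>n. a k * g (i - k))"
    using \<open>n \<le> i\<close> by (intro sum.cong) (simp_all add: cyclic_shift_funpow del: of_nat_diff)
  ultimately show ?thesis
    by (intro SUP_upper2[of n]) (simp_all add: weighted_avg_def)
qed

lemma good_weight_imp_maximal_inequality:
  assumes "good_weight p a"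
  shows "maximal_inequality p a"
proof -
  obtain C where "C > 0" and ergodic: "\<And>M T (f :: real \<Rightarrow> complex).
        pmp_system M T \<and> f \<in> borel_measurable M \<and>
        (\<integral>\<^sup>+ x. ennreal (norm (f x) powr p) \<partial>M) < \<infinity> \<Longrightarrow>
        (\<integral>\<^sup>+ x. (SUP n. ennreal ((norm (\<Sum>k\<le>n. a k * f ((T ^^ k) x))
                                    / (\<Sum>k\<le>n. norm (a k))) powr p)) \<partial>M)
          \<le> ennreal (C powr p) * (\<integral>\<^sup>+ x. ennreal (norm (f x) powr p) \<partial>M)"
    using assms unfolding good_weight_def by blast
  have "(\<Sum>i<N. maximal_avg a g i powr p) \<le> C powr p * (\<Sum>i<N. norm (g i) powr p)" for N g
  proof (cases "N = 0")
    case False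
    let ?M = "measure_pmf (pmf_of_set (real ` {..<N}))"
    define f where "f x = g (nat \<lfloor>x\<rfloor>)" for x :: real
    define G where "G = (\<Sum>i<N. norm (g i) powr p)"
    have "G \<ge> 0" unfolding G_def by (simp add: sum_nonneg)
    have N_ennreal: "(of_nat N :: ennreal) = ennreal (real N)"
      by (simp add: ennreal_of_nat_eq_real_of_nat)
    have f_norm: "(\<integral>\<^sup>+ x. ennreal (norm (f x) powr p) \<partial>?M) = ennreal (G / real N)"
      using False by (simp add: nn_integral_uniform_range f_def G_def N_ennreal sum_ennreal
                                divide_ennreal sum_nonneg)
    have "ennreal ((\<Sum>i<N. maximal_avg a g i powr p) / real N)
            = (\<Sum>i<N. ennreal (maximal_avg a g i powr p)) / of_nat N"
      using False by (simp add: N_ennreal sum_ennreal divide_ennreal sum_nonneg)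
    also have "\<dots> \<le> (\<Sum>i<N. SUP n. ennreal ((norm (\<Sum>k\<le>n. a k * f ((cyclic_shift N ^^ k) (real i)))
                                              / (\<Sum>k\<le>n. norm (a k))) powr p)) / of_nat N"
      unfolding f_def by (intro divide_right_mono_ennreal sum_mono maximal_avg_powr_le_SUP_cyclic_shift)
    also have "\<dots> = (\<integral>\<^sup>+ x. (SUP n. ennreal ((norm (\<Sum>k\<le>n. a k * f ((cyclic_shift N ^^ k) x))
                                              / (\<Sum>k\<le>n. norm (a k))) powr p)) \<partial>?M)"
      using False by (simp add: nn_integral_uniform_range)
    also have "\<dots> \<le> ennreal (C powr p) * ennreal (G / real N)"
      using pmp_system_cyclic_shift[of N] False f_norm by (intro order_trans[OF ergodic]) auto
    also have "\<dots> = ennreal (C powr p * G / real N)"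
      using \<open>G \<ge> 0\<close> by (simp add: ennreal_mult'' [symmetric])
    finally have "(\<Sum>i<N. maximal_avg a g i powr p) / real N \<le> C powr p * G / real N"
      using \<open>G \<ge> 0\<close> by (simp add: ennreal_le_iff)
    then show ?thesis
      using False by (simp add: G_def divide_le_cancel)
  qed simp
  then show ?thesis
    unfolding maximal_inequality_def using \<open>C > 0\<close> by blast
qed

theorem mainTheorem3:
  fixes p :: real and a :: "nat \<Rightarrow> complex"
  assumes "p > 1" and "good_weight p a"
  shows "lp_bounded p (norlund a) \<and>
         (\<forall>b :: nat \<Rightarrow> real. (\<forall>n. 0 \<le> b n) \<and> antimono b \<longrightarrow>
            lp_bounded p (norlund (\<lambda>n. a n * complex_of_real (b n))))"
proof -
  have "0 < p" using \<open>p > 1\<close> by simp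
  have max_ineq: "maximal_inequality p a"
    using \<open>good_weight p a\<close> by (rule good_weight_imp_maximal_inequality)
  show ?thesis
  proof (intro conjI allI impI)
    show "lp_bounded p (norlund a)"
      using \<open>0 < p\<close> max_ineq by (rule maximal_inequality_imp_lp_bounded)
    fix b :: "nat \<Rightarrow> real"
    assume "(\<forall>n. 0 \<le> b n) \<and> antimono b"
    then show "lp_bounded p (norlund (\<lambda>n. a n * complex_of_real (b n)))"
      using \<open>0 < p\<close> max_ineq
      by (intro maximal_inequality_imp_lp_bounded maximal_inequality_mult_antimono) auto
  qed
qed

end
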